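(* Let $Q(s)$ be an $n\times n$ complex matrix-valued function of a real variable $s$ that is analytic (equal to its Taylor series) in a neighbourhood of a point $t$, and write $Q=Q(t)$, $Q^{(k)}=\frac{d^kQ}{ds^k}(t)$. Let $U(s,s_0)$ denote the fundamental solution of $\frac{d}{ds}U(s,s_0)=Q(s)U(s,s_0)$, $U(s_0,s_0)=I$. Let $a_2,a_3,a_4,a_5,a_6$ be arbitrary real numbers, and set $$k_1=a_2-2a_3-\tfrac{1}{12},\quad k_2=\tfrac{1}{24}\big(k_1+\tfrac{1}{30}\big),\quad k_3=\tfrac{k_1}{8},\quad k_4=-\tfrac{1}{12}\big(k_1-\tfrac{1}{60}\big),$$ $$k_5=\tfrac{1}{120}-\tfrac{a_2}{4}+\tfrac{a_3}{2}+2a_2^2-10a_2a_3+12a_3^2+a_4-2a_5 .$$ For $\tau>0$ define $Z=\tau Z_1+\tau^3Z_3+\tau^5Z_5$, where $[A,B]=AB-BA$ and $$Z_1=Q,\qquad Z_3=\tfrac{1}{24}Q^{(2)}+\tfrac{1}{12}\big[Q^{(1)},Q\big]+k_1Q^3,$$ $$Z_5=\tfrac{1}{1920}Q^{(4)}+\tfrac{1}{480}\big[Q^{(3)},Q\big]+\tfrac{1}{480}\big[Q^{(1)},Q^{(2)}\big]+\tfrac{1}{240}\big[[Q,Q^{(1)}],Q^{(1)}\big]+k_2\big[[Q^{(2)},Q],Q\big]+k_3\,QQ^{(2)}Q+k_4\big[Q^3,Q^{(1)}\big]+\tfrac{1}{240}\big[QQ^{(1)}Q,Q\big]+k_5Q^5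 ,$$ and define $$T(Z)=\Big(I+\tfrac12 Z+a_2Z^2+a_3Z^3+a_4Z^4+a_5Z^5+a_6Z^6\Big)\Big(I-\tfrac12 Z+a_2Z^2-a_3Z^3+a_4Z^4-a_5Z^5+a_6Z^6\Big)^{-1}$$ (the two factors commute; the inverse exists for all sufficiently small $\tau$). Then, as $\tau\to 0$, $$U\big(t+\tau/2,\,t-\tau/2\big)=T(Z)+O(\tau^7).$$
   Context: $I$ denotes the $n\times n$ identity matrix. $T(Z)$ is a "generalized Cayley transform" $F(Z)/F(-Z)$ with the real polynomial $F(z)=1+\frac12 z+a_2z^2+a_3z^3+a_4z^4+a_5z^5+a_6z^6$; it serves as the transition matrix of a one-step scheme $\Psi_{n+1}=T\Psi_n$ for the linear system $\frac{d\Psi}{ds}=Q(s)\Psi$. *)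

theory Defs
  imports "HOL-Analysis.Analysis" "HOL-Library.Landau_Symbols"
begin

type_synonym 'n cmat = "complex ^'n ^'n"

fun mpow :: "'n::finite cmat \<Rightarrow> nat \<Rightarrow> 'n cmat" where
  "mpow A 0 = mat 1"
| "mpow A (Suc k) = A ** mpow A k"

definition comm :: "'n::finite cmat \<Rightarrow> 'n cmat \<Rightarrow> 'n cmat" where
  "comm A B = A ** B - B ** A"

fun hderiv :: "nat \<Rightarrow> (real \<Rightarrow> 'a::real_normed_vector) \<Rightarrow> real \<Rightarrow> 'a" where
  "hderiv 0 f = f"
| "hderiv (Suc k) f = (\<lambda>s. vector_derivative (hderiv k f) (at s))"

definition analytic_near :: "(real \<Rightarrow> 'a::real_normed_vector) \<Rightarrow> real \<Rightarrow> real \<Rightarrow> bool" where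
  "analytic_near f t \<delta> \<longleftrightarrow> \<delta> > 0 \<and>
     (\<forall>k s. \<bar>s - t\<bar> < \<delta> \<longrightarrow>
        (hderiv k f has_vector_derivative hderiv (Suc k) f s) (at s)) \<and>
     (\<forall>s. \<bar>s - t\<bar> < \<delta> \<longrightarrow>
        (\<lambda>k. ((s - t) ^ k / fact k) *\<^sub>R hderiv k f t) sums f s)"

definition Fpoly :: "real \<Rightarrow> real \<Rightarrow> real \<Rightarrow> real \<Rightarrow> real \<Rightarrow> 'n::finite cmat \<Rightarrow> 'n cmat" where
  "Fpoly a2 a3 a4 a5 a6 Z = mat 1 + (1/2) *\<^sub>R Z + a2 *\<^sub>R mpow Z 2 + a3 *\<^sub>R mpow Z 3
      + a4 *\<^sub>R mpow Z 4 + a5 *\<^sub>R mpow Z 5 + a6 *\<^sub>R mpow Z 6"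

definition Tcay :: "real \<Rightarrow> real \<Rightarrow> real \<Rightarrow> real \<Rightarrow> real \<Rightarrow> 'n::finite cmat \<Rightarrow> 'n cmat" where
  "Tcay a2 a3 a4 a5 a6 Z = Fpoly a2 a3 a4 a5 a6 Z ** matrix_inv (Fpoly a2 a3 a4 a5 a6 (- Z))"

end

theory Submission
  imports Defs
begin

(*
  Write V h = U (t + h) t, so that U (t + \<tau>/2) (t - \<tau>/2) V (-\<tau>/2) = V (\<tau>/2), and put
  H \<tau> = F (-Z \<tau>) V (\<tau>/2).  Since Z is odd in \<tau>, H (-\<tau>) = F (Z \<tau>) V (-\<tau>/2), and as F (Z) and
  F (-Z) commute,
    F (-Z) (U (t + \<tau>/2) (t - \<tau>/2) - T Z) V (-\<tau>/2) = H \<tau> - H (-\<tau>).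
  Both F (-Z) and V (-\<tau>/2) are close to the identity, so it suffices to show H \<tau> - H (-\<tau>) = O(\<tau>^7).

  Up to O(\<tau>^7), Z and V are polynomials in \<tau> whose coefficients are noncommutative polynomials
  in the derivatives of Q at t; for V these are the terms of its Taylor expansion, determined by
  the differential equation and justified by a Gronwall estimate.  The claim thus reduces to the
  vanishing of the odd part of the degree 6 truncation of the formal product F (-Z) V (\<tau>/2).  This
  finite identity, which is where the values of k1, ..., k5 come from, is checked by symbolic
  computation with these polynomials.
*)

lemma norm_vec_le_sum_norm: "norm (x :: 'a::real_normed_vector^'n) \<le> (\<Sum>i\<in>UNIV. norm (x $ i))"
  unfolding norm_vec_def by (rule L2_set_le_sum) simp

lemma norm_matrix_mult_le:
  fixes A B :: "'a::real_normed_div_algebra^'n^'n"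
  shows "norm (A ** B) \<le> real CARD('n) ^ 3 * (norm A * norm B)"
proof -
  have entry: "norm ((A ** B) $ i $ j) \<le> real CARD('n) * (norm A * norm B)" for i j
  proof -
    have "norm ((A ** B) $ i $ j) \<le> (\<Sum>k\<in>UNIV. norm (A $ i $ k) * norm (B $ k $ j))"
      using norm_sum[of "\<lambda>k. A $ i $ k * B $ k $ j" UNIV]
      by (simp add: matrix_matrix_mult_def norm_mult)
    also have "\<dots> \<le> (\<Sum>k\<in>(UNIV::'n set). norm A * norm B)"
      by (intro sum_mono mult_mono)
        (auto intro: order_trans[OF Finite_Cartesian_Product.norm_nth_le
            Finite_Cartesian_Product.norm_nth_le])
    finally show ?thesis by simp
  qed
  have "norm (A ** B) \<le> (\<Sum>i\<in>UNIV. \<Sum>j\<in>UNIV. norm ((A ** B) $ i $ j))"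
    by (intro order_trans[OF norm_vec_le_sum_norm] sum_mono norm_vec_le_sum_norm)
  also have "\<dots> \<le> (\<Sum>i\<in>(UNIV::'n set). \<Sum>j\<in>(UNIV::'n set). real CARD('n) * (norm A * norm B))"
    by (intro sum_mono entry)
  finally show ?thesis by (simp add: power3_eq_cube)
qed

lemma matrix_add_rdistrib: "((A :: 'a::semiring_1^'n^'m) + B) ** C = A ** C + B ** C"
  by (simp add: matrix_matrix_mult_def vec_eq_iff sum.distrib distrib_right)

lemma bounded_bilinear_matrix_mult:
  "bounded_bilinear ((**) :: 'a::real_normed_div_algebra^'n^'n \<Rightarrow> 'a^'n^'n \<Rightarrow> 'a^'n^'n)"
proof
  show "\<exists>K. \<forall>(A :: 'a^'n^'n) (B :: 'a^'n^'n). norm (A ** B) \<le> norm A * norm B * K"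
  proof (intro exI allI)
    fix A B :: "'a^'n^'n"
    show "norm (A ** B) \<le> norm A * norm B * real CARD('n) ^ 3"
      using norm_matrix_mult_le[of A B] by (simp add: mult_ac)
  qed
qed (simp_all add: matrix_add_ldistrib matrix_add_rdistrib matrix_scalar_ac scalar_matrix_assoc)

interpretation matrix_mult:
  bounded_bilinear "(**) :: 'a::real_normed_div_algebra^'n^'n \<Rightarrow> 'a^'n^'n \<Rightarrow> 'a^'n^'n"
  by (rule bounded_bilinear_matrix_mult)

lemma norm_le_twice_norm_matrix_mult:
  fixes D X :: "'a::real_normed_div_algebra^'n^'n"
  assumes small: "real CARD('n) ^ 3 * norm (D - mat 1) \<le> 1/2"
  shows "norm X \<le> 2 * norm (D ** X)" "norm X \<le> 2 * norm (X ** D)"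
proof -
  have half: "real CARD('n) ^ 3 * (norm (D - mat 1) * norm X) \<le> norm X / 2"
    using mult_right_mono[OF small norm_ge_zero[of X]] by (simp add: mult.assoc)
  have "norm X \<le> norm (D ** X) + norm ((D - mat 1) ** X)"
    using norm_triangle_ineq4[of "D ** X" "(D - mat 1) ** X"] by (simp add: matrix_mult.diff_left)
  then show "norm X \<le> 2 * norm (D ** X)"
    using norm_matrix_mult_le[of "D - mat 1" X] half by linarith
  have "norm X \<le> norm (X ** D) + norm (X ** (D - mat 1))"
    using norm_triangle_ineq4[of "X ** D" "X ** (D - mat 1)"] by (simp add: matrix_mult.diff_right)
  then show "norm X \<le> 2 * norm (X ** D)"
    using norm_matrix_mult_le[of X "D - mat 1"] half by (simp add: mult.commute[of "norm X"])
qed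

lemma matrix_inv_near_identity:
  fixes D :: "'a::real_normed_field^'n^'n"
  assumes "real CARD('n) ^ 3 * norm (D - mat 1) \<le> 1/2"
  shows "D ** matrix_inv D = mat 1"
proof -
  have "x = 0" if "D *v x = 0" for x
  proof -
    define X :: "'a^'n^'n" where "X = (\<chi> i j. x $ i)"
    have "(D ** X) $ i $ j = (D *v x) $ i" for i j
      by (simp add: X_def matrix_matrix_mult_def matrix_vector_mult_def)
    then have "D ** X = 0"
      using that by (simp add: vec_eq_iff)
    then have "X = 0"
      using norm_le_twice_norm_matrix_mult(1)[OF assms, of X] by simp
    then show "x = 0"
      by (simp add: X_def vec_eq_iff)
  qed
  then have "\<exists>E. E ** D = mat 1"
    by (subst matrix_left_invertible_ker) blast
  then have "invertible D"
    by (simp add: invertible_left_inverse)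
  then have "\<exists>E. D ** E = mat 1 \<and> E ** D = mat 1"
    by (simp add: invertible_def)
  then show ?thesis
    unfolding matrix_inv_def by (rule someI2_ex) simp
qed

lemma norm_sub_cayley_le:
  fixes A B C D W :: "'a::{real_normed_field}^'n^'n"
  assumes D: "real CARD('n) ^ 3 * norm (D - mat 1) \<le> 1/2"
    and B: "real CARD('n) ^ 3 * norm (B - mat 1) \<le> 1/2"
    and "D ** C = C ** D" and "W ** B = A"
  shows "norm (W - C ** matrix_inv D) \<le> 4 * norm (D ** A - C ** B)"
proof -
  let ?E = "W - C ** matrix_inv D"
  have "D ** (C ** matrix_inv D) = C ** (D ** matrix_inv D)"
    by (simp add: matrix_mul_assoc assms(3))
  then have "D ** (C ** matrix_inv D) = C"
    by (simp add: matrix_inv_near_identity[OF D])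
  moreover have "D ** W ** B = D ** A"
    using assms(4) by (simp flip: matrix_mul_assoc)
  ultimately have eq: "D ** ?E ** B = D ** A - C ** B"
    by (simp add: matrix_mult.diff_left matrix_mult.diff_right)
  have "norm ?E \<le> 4 * norm (D ** ?E ** B)"
    using norm_le_twice_norm_matrix_mult(1)[OF D, of ?E]
      norm_le_twice_norm_matrix_mult(2)[OF B, of "D ** ?E"] by linarith
  then show ?thesis
    unfolding eq .
qed

lemma mpow_commute:
  assumes "P ** A = A ** P"
  shows "P ** mpow A k = mpow A k ** P"
proof (induct k)
  case (Suc k)
  have "P ** mpow A (Suc k) = A ** (P ** mpow A k)"
    by (simp add: matrix_mul_assoc assms)
  also have "\<dots> = mpow A (Suc k) ** P"
    by (simp add: Suc matrix_mul_assoc)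
  finally show ?case .
qed simp

lemma Fpoly_commute:
  assumes "P ** A = A ** P"
  shows "P ** Fpoly a2 a3 a4 a5 a6 A = Fpoly a2 a3 a4 a5 a6 A ** P"
  using mpow_commute[OF assms]
  by (simp add: Fpoly_def matrix_mult.add_left matrix_mult.add_right matrix_mult.scaleR_left
      matrix_mult.scaleR_right assms)

lemma Fpoly_zero: "Fpoly a2 a3 a4 a5 a6 0 = mat 1"
  by (simp add: Fpoly_def eval_nat_numeral)

lemma Fpoly_uminus_commute:
  "Fpoly a2 a3 a4 a5 a6 (- A) ** Fpoly a2 a3 a4 a5 a6 A
     = Fpoly a2 a3 a4 a5 a6 A ** Fpoly a2 a3 a4 a5 a6 (- A)"
proof (rule Fpoly_commute)
  show "Fpoly a2 a3 a4 a5 a6 (- A) ** A = A ** Fpoly a2 a3 a4 a5 a6 (- A)"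
    by (rule Fpoly_commute[symmetric]) (simp add: matrix_mult.minus_left matrix_mult.minus_right)
qed

section \<open>Noncommutative polynomials with a scalar parameter\<close>

type_synonym monomial = "real \<times> nat \<times> nat list"
type_synonym ncpoly = "monomial list"

fun word_prod :: "(nat \<Rightarrow> 'n::finite cmat) \<Rightarrow> nat list \<Rightarrow> 'n cmat" where
  "word_prod q [] = mat 1"
| "word_prod q (i # w) = q i ** word_prod q w"

definition eval_monomial :: "(nat \<Rightarrow> 'n::finite cmat) \<Rightarrow> real \<Rightarrow> monomial \<Rightarrow> 'n cmat" where
  "eval_monomial q x m = (case m of (c, k, w) \<Rightarrow> (c * x ^ k) *\<^sub>R word_prod q w)"

definition eval_ncpoly :: "(nat \<Rightarrow> 'n::finite cmat) \<Rightarrow> real \<Rightarrow> ncpoly \<Rightarrow> 'n cmat" where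
  "eval_ncpoly q x p = sum_list (map (eval_monomial q x) p)"

definition ncp_one :: ncpoly where
  "ncp_one = [(1, 0, [])]"

definition ncp_var :: "nat \<Rightarrow> ncpoly" where
  "ncp_var i = [(1, 0, [i])]"

definition ncp_scale :: "real \<Rightarrow> ncpoly \<Rightarrow> ncpoly" where
  "ncp_scale r p = map (\<lambda>(c, k, w). (r * c, k, w)) p"

definition ncp_shift :: "nat \<Rightarrow> ncpoly \<Rightarrow> ncpoly" where
  "ncp_shift j p = map (\<lambda>(c, k, w). (c, k + j, w)) p"

definition ncp_dilate :: "real \<Rightarrow> ncpoly \<Rightarrow> ncpoly" where
  "ncp_dilate r p = map (\<lambda>(c, k, w). (c * r ^ k, k, w)) p"

definition ncp_deriv :: "ncpoly \<Rightarrow> ncpoly" where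
  "ncp_deriv p = map (\<lambda>(c, k, w). (c * real k, k - 1, w)) p"

definition ncp_mult :: "ncpoly \<Rightarrow> ncpoly \<Rightarrow> ncpoly" where
  "ncp_mult p p' = concat (map (\<lambda>(c, k, w). map (\<lambda>(d, l, v). (c * d, k + l, w @ v)) p') p)"

definition ncp_mult_trunc :: "nat \<Rightarrow> ncpoly \<Rightarrow> ncpoly \<Rightarrow> ncpoly" where
  "ncp_mult_trunc N p p' = concat (map (\<lambda>(c, k, w). map (\<lambda>(d, l, v). (c * d, k + l, w @ v))
     (filter (\<lambda>(d, l, v). k + l \<le> N) p')) p)"

definition ncp_comm :: "ncpoly \<Rightarrow> ncpoly \<Rightarrow> ncpoly" where
  "ncp_comm p p' = ncp_mult p p' @ ncp_scale (-1) (ncp_mult p' p)"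

fun ncp_pow :: "ncpoly \<Rightarrow> nat \<Rightarrow> ncpoly" where
  "ncp_pow p 0 = ncp_one"
| "ncp_pow p (Suc k) = ncp_mult p (ncp_pow p k)"

fun ncp_insert :: "monomial \<Rightarrow> ncpoly \<Rightarrow> ncpoly" where
  "ncp_insert m [] = [m]"
| "ncp_insert m (m' # p) =
     (if snd m = snd m' then (fst m + fst m', snd m') # p else m' # ncp_insert m p)"

fun ncp_collect :: "ncpoly \<Rightarrow> ncpoly" where
  "ncp_collect [] = []"
| "ncp_collect (m # p) = ncp_insert m (ncp_collect p)"

(* \<Sum>j. cs!j p^j P truncated at degree N; passing the current power P computes each power once *)
fun ncp_poly_trunc :: "nat \<Rightarrow> ncpoly \<Rightarrow> ncpoly \<Rightarrow> real list \<Rightarrow> ncpoly" where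
  "ncp_poly_trunc N p P [] = []"
| "ncp_poly_trunc N p P (c # cs) =
     ncp_scale c P @ ncp_poly_trunc N p (ncp_collect (ncp_mult_trunc N p P)) cs"

definition ncp_weight :: "(nat \<Rightarrow> 'n::finite cmat) \<Rightarrow> ncpoly \<Rightarrow> real" where
  "ncp_weight q p = sum_list (map (\<lambda>(c, k, w). \<bar>c\<bar> * norm (word_prod q w)) p)"

lemma ncp_weight_nonneg: "0 \<le> ncp_weight q p"
  by (induct p) (auto simp: ncp_weight_def)

lemma word_prod_append: "word_prod q (w @ v) = word_prod q w ** word_prod q v"
  by (induct w) (simp_all add: matrix_mul_assoc)

lemma eval_ncpoly_Nil [simp]: "eval_ncpoly q x [] = 0"
  and eval_ncpoly_Cons: "eval_ncpoly q x (m # p) = eval_monomial q x m + eval_ncpoly q x p"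
  and eval_ncpoly_append: "eval_ncpoly q x (p @ p') = eval_ncpoly q x p + eval_ncpoly q x p'"
  by (simp_all add: eval_ncpoly_def)

lemma eval_ncpoly_mult: "eval_ncpoly q x (ncp_mult p p') = eval_ncpoly q x p ** eval_ncpoly q x p'"
proof (induct p)
  case (Cons m p)
  obtain c k w where m: "m = (c, k, w)"
    by (cases m)
  have "eval_ncpoly q x (map (\<lambda>(d, l, v). (c * d, k + l, w @ v)) p')
      = eval_monomial q x m ** eval_ncpoly q x p'"
    by (induct p') (auto simp: m eval_ncpoly_Cons eval_monomial_def matrix_mult.add_right
        matrix_mult.scaleR_left matrix_mult.scaleR_right word_prod_append power_add)
  then show ?case
    using Cons
    by (simp add: ncp_mult_def eval_ncpoly_append eval_ncpoly_Cons matrix_mult.add_left m)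
qed (simp add: ncp_mult_def)

lemma ncp_mult_trunc_eq_filter: "ncp_mult_trunc N p p' = filter (\<lambda>(c, k, w). k \<le> N) (ncp_mult p p')"
  unfolding ncp_mult_trunc_def ncp_mult_def
  by (induct p) (auto simp: filter_map o_def split_def intro!: arg_cong2[where f=map] filter_cong)

lemma eval_ncpoly_insert:
  "eval_ncpoly q x (ncp_insert m p) = eval_monomial q x m + eval_ncpoly q x p"
  by (cases m, induct p) (auto simp: eval_ncpoly_Cons eval_monomial_def algebra_simps)

lemma eval_ncpoly_collect: "eval_ncpoly q x (ncp_collect p) = eval_ncpoly q x p"
  by (induct p) (simp_all add: eval_ncpoly_insert eval_ncpoly_Cons)

lemma eval_ncpoly_scale: "eval_ncpoly q x (ncp_scale r p) = r *\<^sub>R eval_ncpoly q x p"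
  by (induct p) (auto simp: ncp_scale_def eval_ncpoly_Cons eval_monomial_def scaleR_add_right)

lemma eval_ncpoly_shift: "eval_ncpoly q x (ncp_shift j p) = x ^ j *\<^sub>R eval_ncpoly q x p"
  by (induct p)
    (auto simp: ncp_shift_def eval_ncpoly_Cons eval_monomial_def power_add algebra_simps)

lemma eval_ncpoly_dilate: "eval_ncpoly q x (ncp_dilate r p) = eval_ncpoly q (r * x) p"
  by (induct p) (auto simp: ncp_dilate_def eval_ncpoly_Cons eval_monomial_def algebra_simps)

lemma eval_ncpoly_one: "eval_ncpoly q x ncp_one = mat 1"
  and eval_ncpoly_var: "eval_ncpoly q x (ncp_var i) = q i"
  by (simp_all add: ncp_one_def ncp_var_def eval_ncpoly_Cons eval_monomial_def)

lemma eval_ncpoly_comm: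
  "eval_ncpoly q x (ncp_comm p p') = comm (eval_ncpoly q x p) (eval_ncpoly q x p')"
  by (simp add: ncp_comm_def eval_ncpoly_append eval_ncpoly_scale eval_ncpoly_mult comm_def)

lemma eval_ncpoly_pow: "eval_ncpoly q x (ncp_pow p k) = mpow (eval_ncpoly q x p) k"
  by (induct k) (simp_all add: eval_ncpoly_one eval_ncpoly_mult)

lemma eval_ncpoly_filter:
  "eval_ncpoly q x p = eval_ncpoly q x (filter P p) + eval_ncpoly q x (filter (Not \<circ> P) p)"
  by (induct p) (auto simp: eval_ncpoly_Cons)

lemma eval_ncpoly_eq_0_if_collected_zero:
  assumes "\<forall>m\<in>set (ncp_collect p). fst m = 0"
  shows "eval_ncpoly q x p = 0"
proof -
  have "eval_ncpoly q x p' = 0" if "\<forall>m\<in>set p'. fst m = 0" for p'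
    using that by (induct p') (auto simp: eval_ncpoly_Cons eval_monomial_def)
  then show ?thesis
    using assms eval_ncpoly_collect by metis
qed

lemma has_vector_derivative_eval_ncpoly:
  "((\<lambda>x. eval_ncpoly q (x - a) p) has_vector_derivative eval_ncpoly q (x - a) (ncp_deriv p))
     (at x within S)"
proof (induct p)
  case (Cons m p)
  obtain c k w where m: "m = (c, k, w)"
    by (cases m)
  have "((\<lambda>x. c * (x - a) ^ k) has_real_derivative c * real k * (x - a) ^ (k - 1)) (at x within S)"
    by (auto intro!: derivative_eq_intros)
  from has_vector_derivative_scaleR[OF this has_vector_derivative_const]
  have "((\<lambda>x. eval_monomial q (x - a) m) has_vector_derivative
      eval_monomial q (x - a) (c * real k, k - 1, w)) (at x within S)"
    by (simp add: eval_monomial_def m)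
  from has_vector_derivative_add[OF this Cons]
  show ?case
    by (simp add: eval_ncpoly_Cons ncp_deriv_def m)
qed (simp add: ncp_deriv_def)

lemma norm_eval_ncpoly_le:
  assumes "\<bar>x\<bar> \<le> 1" and "\<forall>(c, k, w)\<in>set p. d \<le> k"
  shows "norm (eval_ncpoly q x p) \<le> ncp_weight q p * \<bar>x\<bar> ^ d"
  using assms(2)
proof (induct p)
  case (Cons m p)
  obtain c k w where m: "m = (c, k, w)"
    by (cases m)
  have "\<bar>x\<bar> ^ k \<le> \<bar>x\<bar> ^ d"
    using Cons.prems power_decreasing[of d k "\<bar>x\<bar>"] assms(1) by (auto simp: m)
  then have "norm (eval_monomial q x m) \<le> \<bar>c\<bar> * norm (word_prod q w) * \<bar>x\<bar> ^ d"
    by (auto simp: m eval_monomial_def abs_mult power_abs mult_ac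
        intro!: mult_left_mono mult_right_mono)
  then show ?case
    using Cons norm_triangle_le[OF add_mono]
    by (fastforce simp: eval_ncpoly_Cons ncp_weight_def m algebra_simps)
qed (simp add: ncp_weight_def)

section \<open>Approximation to order \<open>N\<close> at zero\<close>

definition ncp_approx :: "nat \<Rightarrow> (nat \<Rightarrow> 'n::finite cmat) \<Rightarrow> (real \<Rightarrow> 'n cmat) \<Rightarrow> ncpoly \<Rightarrow> bool" where
  "ncp_approx N q f p \<longleftrightarrow> (\<lambda>x. norm (f x - eval_ncpoly q x p)) \<in> O[nhds 0](\<lambda>x. x ^ Suc N)"

lemma eventually_abs_le_1_nhds_0: "eventually (\<lambda>x::real. \<bar>x\<bar> \<le> 1) (nhds 0)"
  unfolding eventually_nhds_metric by (intro exI[of _ 1]) (auto simp: dist_real_def)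

lemma bigo_if_norm_le:
  assumes "eventually (\<lambda>x. norm (f x) \<le> g x) F" and "g \<in> O[F](h)"
  shows "f \<in> O[F](h)"
proof -
  have "f \<in> O[F](g)"
    using assms(1) by (intro landau_o.big_mono) (auto elim!: eventually_mono)
  then show ?thesis
    using assms(2) by (rule landau_o.big_trans)
qed

lemma power_bigo_1_nhds_0: "(\<lambda>x::real. x ^ n) \<in> O[nhds 0](\<lambda>_. 1)"
  using eventually_abs_le_1_nhds_0
  by (intro bigoI[of _ 1]) (auto elim!: eventually_mono simp: power_abs power_le_one)

lemma norm_eval_ncpoly_bigo:
  assumes "\<forall>(c, k, w)\<in>set p. d \<le> k"
  shows "(\<lambda>x. norm (eval_ncpoly q x p)) \<in> O[nhds 0](\<lambda>x. x ^ d)"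
  using eventually_abs_le_1_nhds_0
  by (intro bigoI[of _ "ncp_weight q p"])
    (auto elim!: eventually_mono intro: norm_eval_ncpoly_le[OF _ assms] simp: power_abs)

lemma tendsto_eval_ncpoly: "(g \<longlongrightarrow> a) F \<Longrightarrow> ((\<lambda>x. eval_ncpoly q (g x) p) \<longlongrightarrow> eval_ncpoly q a p) F"
  by (induct p) (auto simp: eval_ncpoly_Cons eval_monomial_def intro!: tendsto_intros)

lemma ncp_approx_eval: "ncp_approx N q (\<lambda>x. eval_ncpoly q x p) p"
  by (simp add: ncp_approx_def)

lemma ncp_approx_cong:
  "ncp_approx N q f p \<Longrightarrow> (\<And>x. eval_ncpoly q x p = eval_ncpoly q x p') \<Longrightarrow> ncp_approx N q f p'"
  by (simp add: ncp_approx_def)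

lemma ncp_approx_collect: "ncp_approx N q f p \<Longrightarrow> ncp_approx N q f (ncp_collect p)"
  by (erule ncp_approx_cong) (simp add: eval_ncpoly_collect)

lemma ncp_approx_add:
  assumes "ncp_approx N q f p" and "ncp_approx N q g p'"
  shows "ncp_approx N q (\<lambda>x. f x + g x) (p @ p')"
  unfolding ncp_approx_def
proof (rule bigo_if_norm_le)
  show "(\<lambda>x. norm (f x - eval_ncpoly q x p) + norm (g x - eval_ncpoly q x p'))
      \<in> O[nhds 0](\<lambda>x. x ^ Suc N)"
    using assms unfolding ncp_approx_def by (rule sum_in_bigo)
qed (simp add: eval_ncpoly_append norm_diff_triangle_ineq)

lemma ncp_approx_scale:
  assumes "ncp_approx N q f p"
  shows "ncp_approx N q (\<lambda>x. r *\<^sub>R f x) (ncp_scale r p)"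
proof (cases "r = 0")
  case False
  with assms show ?thesis
    by (simp add: ncp_approx_def eval_ncpoly_scale flip: scaleR_diff_right)
qed (simp add: ncp_approx_def eval_ncpoly_scale)

lemma ncp_approx_dilate:
  assumes "ncp_approx N q f p"
  shows "ncp_approx N q (\<lambda>x. f (r * x)) (ncp_dilate r p)"
proof -
  have "filterlim (\<lambda>x. r * x) (nhds 0) (nhds (0::real))"
    by (rule tendsto_mult_right_zero[OF filterlim_ident])
  with assms have "(\<lambda>x. norm (f (r * x) - eval_ncpoly q (r * x) p))
      \<in> O[nhds 0](\<lambda>x. (r * x) ^ Suc N)"
    unfolding ncp_approx_def by (rule landau_o.big.compose)
  moreover have "(\<lambda>x. (r * x) ^ Suc N) \<in> O[nhds 0](\<lambda>x. x ^ Suc N)"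
    by (intro bigoI[of _ "\<bar>r\<bar> ^ Suc N"]) (simp add: power_mult_distrib abs_mult power_abs)
  ultimately show ?thesis
    unfolding ncp_approx_def eval_ncpoly_dilate by (rule landau_o.big_trans)
qed

lemma ncp_approx_continuous:
  assumes "ncp_approx N q f p"
  shows "(f \<longlongrightarrow> f 0) (nhds 0)"
proof -
  obtain c
    where "eventually (\<lambda>x. norm (norm (f x - eval_ncpoly q x p)) \<le> c * norm (x ^ Suc N)) (nhds 0)"
    using assms unfolding ncp_approx_def by (elim landau_o.bigE)
  then have bound: "eventually (\<lambda>x. norm (f x - eval_ncpoly q x p) \<le> c * \<bar>x\<bar> ^ Suc N) (nhds 0)"
    by (simp add: abs_mult power_abs)
  then have "f 0 = eval_ncpoly q 0 p"
    by (auto dest: eventually_nhds_x_imp_x)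
  have "((\<lambda>x::real. c * \<bar>x\<bar> ^ Suc N) \<longlongrightarrow> 0) (nhds 0)"
    by (auto intro!: tendsto_eq_intros filterlim_ident)
  with bound have "((\<lambda>x. f x - eval_ncpoly q x p) \<longlongrightarrow> 0) (nhds 0)"
    by (rule Lim_null_comparison)
  from tendsto_add[OF this tendsto_eval_ncpoly[OF filterlim_ident, where q=q and p=p]]
  show ?thesis
    using \<open>f 0 = eval_ncpoly q 0 p\<close> by simp
qed

lemma ncp_approx_mult_trunc:
  fixes f g :: "real \<Rightarrow> 'n::finite cmat"
  assumes f: "ncp_approx N q f p" and g: "ncp_approx N q g p'"
  shows "ncp_approx N q (\<lambda>x. f x ** g x) (ncp_mult_trunc N p p')"
proof -
  let ?P = "\<lambda>x. eval_ncpoly q x p" and ?P' = "\<lambda>x. eval_ncpoly q x p'"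
  let ?O = "\<lambda>h. h \<in> O[nhds 0](\<lambda>x. x ^ Suc N)" and ?O1 = "\<lambda>h. h \<in> O[nhds 0](\<lambda>_. 1)"
  define H where "H = filter (Not \<circ> (\<lambda>(c, k, w). k \<le> N)) (ncp_mult p p')"
  define K where "K = real CARD('n) ^ 3"
  have split: "f x ** g x - eval_ncpoly q x (ncp_mult_trunc N p p')
      = (f x - ?P x) ** g x + ?P x ** (g x - ?P' x) + eval_ncpoly q x H" for x
    using eval_ncpoly_filter[of q x "ncp_mult p p'" "\<lambda>(c, k, w). k \<le> N"]
    by (simp add: H_def ncp_mult_trunc_eq_filter eval_ncpoly_mult matrix_mult.diff_left
        matrix_mult.diff_right algebra_simps)
  have f': "?O (\<lambda>x. norm (f x - ?P x))" and g': "?O (\<lambda>x. norm (g x - ?P' x))"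
    using f g by (simp_all add: ncp_approx_def)
  have P1: "?O1 (\<lambda>x. norm (?P x))" and P'1: "?O1 (\<lambda>x. norm (?P' x))"
    using norm_eval_ncpoly_bigo[of _ 0] by auto
  have g1: "?O1 (\<lambda>x. norm (g x))"
  proof (rule bigo_if_norm_le)
    show "eventually (\<lambda>x. norm (norm (g x)) \<le> norm (g x - ?P' x) + norm (?P' x)) (nhds 0)"
      by (intro always_eventually allI)
        (metis add.commute norm_ge_zero real_norm_def abs_of_nonneg norm_triangle_sub)
    show "?O1 (\<lambda>x. norm (g x - ?P' x) + norm (?P' x))"
      using landau_o.big_trans[OF g' power_bigo_1_nhds_0] P'1 by (rule sum_in_bigo)
  qed
  have H: "?O (\<lambda>x. norm (eval_ncpoly q x H))"
    by (rule norm_eval_ncpoly_bigo) (auto simp: H_def)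
  have "?O (\<lambda>x. K * (norm (f x - ?P x) * norm (g x)) + K * (norm (?P x) * norm (g x - ?P' x))
      + norm (eval_ncpoly q x H))"
    using landau_o.big.mult[OF f' g1] landau_o.big.mult[OF P1 g'] H
    by (intro sum_in_bigo) (simp_all add: K_def)
  then show ?thesis
    unfolding ncp_approx_def
  proof (rule bigo_if_norm_le[rotated], intro always_eventually allI)
    fix x
    have "norm (f x ** g x - eval_ncpoly q x (ncp_mult_trunc N p p'))
        \<le> norm ((f x - ?P x) ** g x) + norm (?P x ** (g x - ?P' x)) + norm (eval_ncpoly q x H)"
      unfolding split by (intro norm_triangle_le add_mono norm_triangle_ineq order_refl)
    then show "norm (norm (f x ** g x - eval_ncpoly q x (ncp_mult_trunc N p p')))
        \<le> K * (norm (f x - ?P x) * norm (g x)) + K * (norm (?P x) * norm (g x - ?P' x))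
          + norm (eval_ncpoly q x H)"
      using norm_matrix_mult_le[of "f x - ?P x" "g x"] norm_matrix_mult_le[of "?P x" "g x - ?P' x"]
      unfolding K_def by simp
  qed
qed

section \<open>Calculus on a segment\<close>

lemma norm_diff_le_vector_derivative_bound:
  fixes f :: "real \<Rightarrow> 'a::real_normed_vector"
  assumes "\<And>x. x \<in> closed_segment a b \<Longrightarrow>
      (f has_vector_derivative f' x) (at x within closed_segment a b)"
    and "\<And>x. x \<in> closed_segment a b \<Longrightarrow> norm (f' x) \<le> B"
  shows "norm (f b - f a) \<le> B * \<bar>b - a\<bar>"
proof -
  have "norm (f b - f a) \<le> B * norm (b - a)"
  proof (rule differentiable_bound[of "closed_segment a b" f "\<lambda>x h. h *\<^sub>R f' x"])
    show "(f has_derivative (\<lambda>h. h *\<^sub>R f' x)) (at x within closed_segment a b)"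
      if "x \<in> closed_segment a b" for x
      using assms(1)[OF that] by (simp add: has_vector_derivative_def)
    show "onorm (\<lambda>h. h *\<^sub>R f' x) \<le> B" if "x \<in> closed_segment a b" for x
      using assms(2)[OF that] by (simp add: onorm_scaleR_left bounded_linear_ident onorm_id)
  qed auto
  then show ?thesis
    by simp
qed

lemma gronwall_short_segment:
  fixes E :: "real \<Rightarrow> 'a::real_normed_vector"
  assumes der: "\<And>x. x \<in> closed_segment a b \<Longrightarrow>
      (E has_vector_derivative E' x) (at x within closed_segment a b)"
    and bound: "\<And>x. x \<in> closed_segment a b \<Longrightarrow> norm (E' x) \<le> L * norm (E x) + K"
    and "0 \<le> L" "0 \<le> K" and short: "\<bar>b - a\<bar> * L \<le> 1/2" and "E a = 0"
  shows "norm (E b) \<le> 2 * K * \<bar>b - a\<bar>"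
proof -
  let ?S = "closed_segment a b"
  have "continuous_on ?S E"
    using der has_vector_derivative_continuous unfolding continuous_on_eq_continuous_within by blast
  then have "continuous_on ?S (\<lambda>x. norm (E x))"
    by (rule continuous_on_norm)
  then obtain y where y: "y \<in> ?S" and max: "\<And>x. x \<in> ?S \<Longrightarrow> norm (E x) \<le> norm (E y)"
    using continuous_attains_sup[of ?S "\<lambda>x. norm (E x)"] by auto
  have sub: "closed_segment a y \<subseteq> ?S"
    using y by (simp add: closed_segment_subset)
  have "norm (E y - E a) \<le> (L * norm (E y) + K) * \<bar>y - a\<bar>"
  proof (rule norm_diff_le_vector_derivative_bound)
    fix x assume "x \<in> closed_segment a y"
    then have x: "x \<in> ?S"
      using sub by blast
    show "(E has_vector_derivative E' x) (at x within closed_segment a y)"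
      using der[OF x] sub by (rule has_vector_derivative_within_subset)
    show "norm (E' x) \<le> L * norm (E y) + K"
      using bound[OF x] max[OF x] \<open>0 \<le> L\<close> by (meson add_right_mono mult_left_mono order_trans)
  qed
  moreover have "\<bar>y - a\<bar> \<le> \<bar>b - a\<bar>"
    using segment_bound1[OF y] by simp
  ultimately have "norm (E y) \<le> (L * norm (E y) + K) * \<bar>b - a\<bar>"
    using assms(3,4,6) by (simp add: order_trans mult_left_mono)
  also have "\<dots> \<le> norm (E y) / 2 + K * \<bar>b - a\<bar>"
    using mult_right_mono[OF short norm_ge_zero[of "E y"]] by (simp add: algebra_simps)
  finally show ?thesis
    using max[of b] by simp
qed

lemma taylor_remainder_bound:
  fixes f :: "nat \<Rightarrow> real \<Rightarrow> 'a::real_normed_vector"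
  assumes der: "\<And>k s. \<bar>s - t\<bar> < r \<Longrightarrow> (f k has_vector_derivative f (Suc k) s) (at s)" and "0 < r"
  shows "\<exists>C. \<forall>h. \<bar>h\<bar> \<le> r/2 \<longrightarrow> norm (f 0 (t + h) - (\<Sum>k<m. (h ^ k / fact k) *\<^sub>R f k t)) \<le> C * \<bar>h\<bar> ^ m"
  using der
proof (induct m arbitrary: f)
  case 0
  have "continuous_on {t - r/2 .. t + r/2} (f 0)"
  proof (intro continuous_at_imp_continuous_on ballI)
    fix x assume "x \<in> {t - r/2 .. t + r/2}"
    then have "\<bar>x - t\<bar> < r"
      using \<open>0 < r\<close> by auto
    then show "isCont (f 0) x"
      using 0 has_vector_derivative_continuous by blast
  qed
  then have "bounded (f 0 ` {t - r/2 .. t + r/2})"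
    by (intro compact_imp_bounded compact_continuous_image) auto
  then obtain C where C: "\<And>x. x \<in> {t - r/2 .. t + r/2} \<Longrightarrow> norm (f 0 x) \<le> C"
    unfolding bounded_iff by blast
  have "norm (f 0 (t + h)) \<le> C" if "\<bar>h\<bar> \<le> r/2" for h
    using that by (intro C) auto
  then show ?case
    by auto
next
  case (Suc m)
  obtain C where C: "\<And>h. \<bar>h\<bar> \<le> r/2 \<Longrightarrow>
      norm (f 1 (t + h) - (\<Sum>k<m. (h ^ k / fact k) *\<^sub>R f (Suc k) t)) \<le> C * \<bar>h\<bar> ^ m"
    using Suc(1)[of "\<lambda>k. f (Suc k)"] Suc(2) by auto
  define g where "g h = f 0 (t + h) - (\<Sum>k<Suc m. (h ^ k / fact k) *\<^sub>R f k t)" for h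
  define g' where "g' h = f 1 (t + h) - (\<Sum>k<m. (h ^ k / fact k) *\<^sub>R f (Suc k) t)" for h
  have "(g has_vector_derivative g' x) (at x)" if "\<bar>x\<bar> < r" for x
  proof -
    have "(\<Sum>k<Suc m. (real k * x ^ (k - 1) / fact k) *\<^sub>R f k t)
        = (\<Sum>k<m. (x ^ k / fact k) *\<^sub>R f (Suc k) t)"
      by (subst sum.lessThan_Suc_shift) (simp del: of_nat_Suc add: fact_Suc)
    moreover have "((\<lambda>h. f 0 (t + h)) has_vector_derivative f 1 (t + x)) (at x)"
      using vector_diff_chain_at[OF has_vector_derivative_add[OF has_vector_derivative_const
          has_vector_derivative_id] Suc(2)[of "t + x" 0]] that by (simp add: o_def)
    ultimately show ?thesis
      unfolding g_def g'_def
      by (auto intro!: derivative_eq_intros has_vector_derivative_sum has_vector_derivative_scaleR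
          has_vector_derivative_const)
  qed
  have "norm (g h) \<le> \<bar>C\<bar> * \<bar>h\<bar> ^ Suc m" if h: "\<bar>h\<bar> \<le> r/2" for h
  proof -
    have "norm (g h - g 0) \<le> (\<bar>C\<bar> * \<bar>h\<bar> ^ m) * \<bar>h - 0\<bar>"
    proof (rule norm_diff_le_vector_derivative_bound)
      fix x assume x: "x \<in> closed_segment 0 h"
      then have "\<bar>x\<bar> \<le> \<bar>h\<bar>"
        using segment_bound1[OF x] by simp
      then show "(g has_vector_derivative g' x) (at x within closed_segment 0 h)"
        using \<open>\<And>x. \<bar>x\<bar> < r \<Longrightarrow> _\<close> h \<open>0 < r\<close> by (auto intro: has_vector_derivative_at_within)
      show "norm (g' x) \<le> \<bar>C\<bar> * \<bar>h\<bar> ^ m"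
        using C[of x] \<open>\<bar>x\<bar> \<le> \<bar>h\<bar>\<close> h unfolding g'_def
        by (smt (verit) abs_ge_self abs_ge_zero mult_mono power_mono zero_le_power)
    qed
    moreover have "g 0 = 0"
      unfolding g_def by (subst sum.lessThan_Suc_shift) simp
    ultimately show ?thesis
      by (simp add: algebra_simps)
  qed
  then show ?case
    unfolding g_def by blast
qed

section \<open>The fundamental solution\<close>

lemma closed_segment_abs_diff_le:
  fixes r a b t d :: real
  assumes "r \<in> closed_segment a b" "\<bar>a - t\<bar> \<le> d" "\<bar>b - t\<bar> \<le> d"
  shows "\<bar>r - t\<bar> \<le> d"
  using assms by (cases "a \<le> b") (auto simp: closed_segment_eq_real_ivl)

lemma fundamental_solution_compose:
  fixes Q :: "real \<Rightarrow> 'n::finite cmat" and U :: "real \<Rightarrow> real \<Rightarrow> 'n cmat"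
  assumes U_ode: "\<And>s s0. \<bar>s - t\<bar> < \<delta> \<Longrightarrow> \<bar>s0 - t\<bar> < \<delta> \<Longrightarrow>
        ((\<lambda>r. U r s0) has_vector_derivative (Q s ** U s s0)) (at s)"
    and U_init: "\<And>s0. \<bar>s0 - t\<bar> < \<delta> \<Longrightarrow> U s0 s0 = mat 1"
    and Q_bound: "\<And>r. \<bar>r - t\<bar> \<le> \<delta>/2 \<Longrightarrow> norm (Q r) \<le> M" and "0 \<le> M" "0 < \<delta>"
    and s0: "\<bar>s0 - t\<bar> \<le> \<delta>/2" and s: "\<bar>s - t\<bar> \<le> \<delta>/2"
    and short: "\<bar>s - s0\<bar> * (real CARD('n) ^ 3 * M) \<le> 1/2"
  shows "U s s0 ** U s0 t = U s t"
proof -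
  define E where "E r = U r s0 ** U s0 t - U r t" for r
  have "norm (E s) \<le> 2 * 0 * \<bar>s - s0\<bar>"
  proof (rule gronwall_short_segment[where E' = "\<lambda>r. Q r ** E r"])
    fix r assume r: "r \<in> closed_segment s0 s"
    then have "\<bar>r - t\<bar> \<le> \<delta>/2"
      using closed_segment_abs_diff_le s0 s by blast
    then have "\<bar>r - t\<bar> < \<delta>" "\<bar>s0 - t\<bar> < \<delta>" "\<bar>t - t\<bar> < \<delta>" and Qr: "norm (Q r) \<le> M"
      using s0 \<open>0 < \<delta>\<close> Q_bound by auto
    then have "(E has_vector_derivative (Q r ** U r s0) ** U s0 t - Q r ** U r t) (at r)"
      unfolding E_def using U_ode
      by (intro has_vector_derivative_diff
          bounded_linear.has_vector_derivative[OF matrix_mult.bounded_linear_left]) auto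
    then show "(E has_vector_derivative Q r ** E r) (at r within closed_segment s0 s)"
      by (simp add: has_vector_derivative_at_within E_def matrix_mult.diff_right matrix_mul_assoc)
    show "norm (Q r ** E r) \<le> real CARD('n) ^ 3 * M * norm (E r) + 0"
      using order_trans[OF norm_matrix_mult_le mult_left_mono[OF mult_right_mono[OF Qr]]]
      by (simp add: mult.assoc)
  qed (use assms in \<open>auto simp: E_def\<close>)
  then show ?thesis
    by (simp add: E_def)
qed

definition Q_taylor :: "nat \<Rightarrow> ncpoly" where
  "Q_taylor N = map (\<lambda>k. (1 / fact k, k, [k])) [0..<Suc N]"

lemma eval_Q_taylor: "eval_ncpoly q x (Q_taylor N) = (\<Sum>k<Suc N. (x ^ k / fact k) *\<^sub>R q k)"
  by (induct N) (simp_all add: Q_taylor_def eval_ncpoly_append eval_ncpoly_Cons eval_monomial_def)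

lemma norm_linear_defect_le:
  fixes A V P T D :: "'n::finite cmat"
  shows "norm (A ** V - D) \<le> real CARD('n) ^ 3 * (norm A * norm (V - P))
      + real CARD('n) ^ 3 * (norm (A - T) * norm P) + norm (T ** P - D)"
proof -
  have eq: "A ** V - D = A ** (V - P) + (A - T) ** P + (T ** P - D)"
    by (simp add: matrix_mult.diff_left matrix_mult.diff_right)
  have "norm (A ** V - D) \<le> norm (A ** (V - P)) + norm ((A - T) ** P) + norm (T ** P - D)"
    unfolding eq using norm_triangle_ineq[of "A ** (V - P) + (A - T) ** P" "T ** P - D"]
      norm_triangle_ineq[of "A ** (V - P)" "(A - T) ** P"] by linarith
  then show ?thesis
    using norm_matrix_mult_le[of A "V - P"] norm_matrix_mult_le[of "A - T" P] by linarith
qed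

lemma norm_formal_defect_le:
  fixes A V :: "'n::finite cmat"
  assumes "\<bar>x\<bar> \<le> 1" "\<bar>x\<bar> \<le> \<bar>h\<bar>" "norm A \<le> M"
    and A: "norm (A - eval_ncpoly q x (Q_taylor N)) \<le> C * \<bar>x\<bar> ^ Suc N"
    and defect: "eval_ncpoly q x (ncp_mult (Q_taylor N) p) - eval_ncpoly q x (ncp_deriv p)
                   = eval_ncpoly q x R"
    and R: "\<forall>(c, k, w)\<in>set R. N \<le> k"
  shows "norm (A ** V - eval_ncpoly q x (ncp_deriv p))
    \<le> real CARD('n) ^ 3 * \<bar>M\<bar> * norm (V - eval_ncpoly q x p)
      + (real CARD('n) ^ 3 * \<bar>C\<bar> * ncp_weight q p + ncp_weight q R) * \<bar>h\<bar> ^ N"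
proof -
  let ?c = "real CARD('n) ^ 3" and ?P = "eval_ncpoly q x p" and ?T = "eval_ncpoly q x (Q_taylor N)"
  have pow: "\<bar>x\<bar> ^ Suc N \<le> \<bar>h\<bar> ^ N" "\<bar>x\<bar> ^ N \<le> \<bar>h\<bar> ^ N"
    using assms(1,2) power_decreasing[of N "Suc N" "\<bar>x\<bar>"] power_mono[of "\<bar>x\<bar>" "\<bar>h\<bar>" N] by auto
  have "?c * (norm A * norm (V - ?P)) \<le> ?c * \<bar>M\<bar> * norm (V - ?P)"
    using assms(3) by (simp add: mult_left_mono mult_right_mono)
  moreover have "norm (A - ?T) * norm ?P \<le> (\<bar>C\<bar> * \<bar>h\<bar> ^ N) * ncp_weight q p"
    using order_trans[OF A mult_mono[OF abs_ge_self pow(1)]]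
      norm_eval_ncpoly_le[OF assms(1), of p 0 q]
    by (intro mult_mono) auto
  then have "?c * (norm (A - ?T) * norm ?P) \<le> ?c * \<bar>C\<bar> * ncp_weight q p * \<bar>h\<bar> ^ N"
    using mult_left_mono[of _ _ ?c] by (simp add: mult_ac)
  moreover have "norm (?T ** ?P - eval_ncpoly q x (ncp_deriv p)) \<le> ncp_weight q R * \<bar>h\<bar> ^ N"
    using defect order_trans[OF norm_eval_ncpoly_le[OF assms(1) R]
        mult_left_mono[OF pow(2) ncp_weight_nonneg]]
    by (simp add: eval_ncpoly_mult)
  ultimately show ?thesis
    using norm_linear_defect_le[of A V "eval_ncpoly q x (ncp_deriv p)" ?P ?T]
      distrib_right[of "?c * \<bar>C\<bar> * ncp_weight q p" "ncp_weight q R" "\<bar>h\<bar> ^ N"] by linarith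
qed

text \<open>
  The hypotheses say that \<open>p\<close> solves \<open>V' = Q V\<close> formally up to order \<open>N\<close>, with \<open>Q\<close> replaced
  by its Taylor polynomial.
\<close>

lemma fundamental_solution_ncp_approx:
  fixes Q V :: "real \<Rightarrow> 'n::finite cmat" and t \<delta> :: real
  defines "q \<equiv> \<lambda>k. hderiv k Q t"
  assumes "0 < \<delta>"
    and Q': "\<And>k s. \<bar>s - t\<bar> < \<delta> \<Longrightarrow> (hderiv k Q has_vector_derivative hderiv (Suc k) Q s) (at s)"
    and V': "\<And>s. \<bar>s - t\<bar> < \<delta> \<Longrightarrow> (V has_vector_derivative Q s ** V s) (at s)"
    and "V t = mat 1" and "eval_ncpoly q 0 p = mat 1"
    and defect: "\<And>x. eval_ncpoly q x (ncp_mult (Q_taylor N) p) - eval_ncpoly q x (ncp_deriv p)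
                    = eval_ncpoly q x R"
    and R: "\<forall>(c, k, w)\<in>set R. N \<le> k"
  shows "ncp_approx N q (\<lambda>h. V (t + h)) p"
proof -
  obtain C where C: "\<And>h. \<bar>h\<bar> \<le> \<delta>/2 \<Longrightarrow>
      norm (Q (t + h) - eval_ncpoly q h (Q_taylor N)) \<le> C * \<bar>h\<bar> ^ Suc N"
    using taylor_remainder_bound[of t \<delta> "\<lambda>k. hderiv k Q" "Suc N", OF Q' \<open>0 < \<delta>\<close>]
    by (auto simp: eval_Q_taylor q_def)
  obtain M where M: "\<And>h. \<bar>h\<bar> \<le> \<delta>/2 \<Longrightarrow> norm (Q (t + h)) \<le> M"
    using taylor_remainder_bound[of t \<delta> "\<lambda>k. hderiv k Q" 0, OF Q' \<open>0 < \<delta>\<close>] by auto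
  define L where "L = real CARD('n) ^ 3 * \<bar>M\<bar>"
  define K where "K = real CARD('n) ^ 3 * \<bar>C\<bar> * ncp_weight q p + ncp_weight q R"
  define e where "e = min (\<delta>/2) (min 1 (1 / (2 * (L + 1))))"
  have "0 \<le> L" "0 \<le> K"
    by (simp_all add: L_def K_def ncp_weight_nonneg)
  have "norm (V (t + h) - eval_ncpoly q h p) \<le> 2 * K * \<bar>h\<bar> ^ Suc N" if h: "\<bar>h\<bar> < e" for h
  proof -
    have "\<bar>h\<bar> * (2 * (L + 1)) < 1"
      using h \<open>0 \<le> L\<close> by (simp add: e_def field_simps)
    then have short: "\<bar>t + h - t\<bar> * L \<le> 1/2"
      by (simp add: algebra_simps)
    define E where "E r = V r - eval_ncpoly q (r - t) p" for r
    have "norm (E (t + h)) \<le> 2 * (K * \<bar>h\<bar> ^ N) * \<bar>t + h - t\<bar>"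
    proof (rule gronwall_short_segment[where L = L and
          E' = "\<lambda>r. Q r ** V r - eval_ncpoly q (r - t) (ncp_deriv p)"])
      fix r assume "r \<in> closed_segment t (t + h)"
      then have "\<bar>r - t\<bar> \<le> \<bar>h\<bar>"
        using segment_bound1 by fastforce
      with h have "\<bar>r - t\<bar> < \<delta>" "\<bar>r - t\<bar> \<le> \<delta>/2" "\<bar>r - t\<bar> \<le> 1"
        using \<open>0 < \<delta>\<close> by (auto simp: e_def)
      show "(E has_vector_derivative Q r ** V r - eval_ncpoly q (r - t) (ncp_deriv p))
          (at r within closed_segment t (t + h))"
        unfolding E_def using has_vector_derivative_at_within[OF V'[OF \<open>\<bar>r - t\<bar> < \<delta>\<close>]]
        by (rule has_vector_derivative_diff[OF _ has_vector_derivative_eval_ncpoly])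
      show "norm (Q r ** V r - eval_ncpoly q (r - t) (ncp_deriv p)) \<le> L * norm (E r) + K * \<bar>h\<bar> ^ N"
        using norm_formal_defect_le[OF \<open>\<bar>r - t\<bar> \<le> 1\<close> \<open>\<bar>r - t\<bar> \<le> \<bar>h\<bar>\<close> _ _ defect R,
            of "Q r" M C "V r"]
          M[of "r - t"] C[of "r - t"] \<open>\<bar>r - t\<bar> \<le> \<delta>/2\<close> by (simp add: L_def K_def E_def)
    qed (use short \<open>0 \<le> L\<close> \<open>0 \<le> K\<close> \<open>V t = mat 1\<close> \<open>eval_ncpoly q 0 p = mat 1\<close> in
        \<open>simp_all add: E_def\<close>)
    then show ?thesis
      by (simp add: E_def mult_ac)
  qed
  moreover have "eventually (\<lambda>h. \<bar>h\<bar> < e) (nhds (0::real))"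
    using \<open>0 < \<delta>\<close> \<open>0 \<le> L\<close> unfolding eventually_nhds_metric
    by (intro exI[of _ e]) (auto simp: e_def dist_real_def)
  ultimately show ?thesis
    unfolding ncp_approx_def
    by (intro bigoI[of _ "2 * K"]) (auto elim!: eventually_mono simp: abs_mult power_abs)
qed

section \<open>Cayley-type transforms\<close>

lemma ncp_approx_poly_trunc:
  assumes f: "ncp_approx N q f p" and "ncp_approx N q (\<lambda>x. mpow (f x) i) P"
  shows "ncp_approx N q (\<lambda>x. \<Sum>j<length cs. cs ! j *\<^sub>R mpow (f x) (i + j)) (ncp_poly_trunc N p P cs)"
  using assms(2)
proof (induct cs arbitrary: i P)
  case (Cons c cs)
  have "ncp_approx N q (\<lambda>x. mpow (f x) (Suc i)) (ncp_collect (ncp_mult_trunc N p P))"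
    using ncp_approx_collect[OF ncp_approx_mult_trunc[OF f Cons.prems]] by simp
  from ncp_approx_add[OF ncp_approx_scale[OF Cons.prems, where r = c] Cons.hyps[OF this]]
  show ?case
    by (simp del: sum.lessThan_Suc add: sum.lessThan_Suc_shift)
qed (simp add: ncp_approx_def)

lemma ncp_approx_Fpoly:
  assumes "ncp_approx N q f p"
  shows "ncp_approx N q (\<lambda>x. Fpoly a2 a3 a4 a5 a6 (f x))
           (ncp_collect (ncp_poly_trunc N p ncp_one [1, 1/2, a2, a3, a4, a5, a6]))"
proof -
  let ?cs = "[1, 1/2, a2, a3, a4, a5, a6]"
  have Fpoly_eq: "Fpoly a2 a3 a4 a5 a6 A = (\<Sum>j<length ?cs. ?cs ! j *\<^sub>R mpow A (0 + j))" for A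
    by (simp add: Fpoly_def eval_nat_numeral add.assoc)
  have "ncp_approx N q (\<lambda>x. mpow (f x) 0) ncp_one"
    using ncp_approx_eval[of N q ncp_one] by (simp add: eval_ncpoly_one)
  then show ?thesis
    unfolding Fpoly_eq by (rule ncp_approx_collect[OF ncp_approx_poly_trunc[OF assms]])
qed

lemma eval_ncpoly_uminus_add_odd:
  "eval_ncpoly q (- x) p + eval_ncpoly q x (filter (\<lambda>(c, k, w). odd k) p)
     = eval_ncpoly q x p - eval_ncpoly q x (filter (\<lambda>(c, k, w). odd k) p)"
  by (induct p) (auto simp: eval_ncpoly_Cons eval_monomial_def power_minus_odd power_minus_even
      algebra_simps)

lemma ncp_approx_reflect:
  assumes approx: "ncp_approx N q f p"
    and odd: "\<And>x. eval_ncpoly q x (filter (\<lambda>(c, k, w). odd k) p) = 0"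
  shows "(\<lambda>x. norm (f x - f (- x))) \<in> O[nhds 0](\<lambda>x. x ^ Suc N)"
proof (rule bigo_if_norm_le)
  have "filterlim uminus (nhds 0) (nhds (0::real))"
    using tendsto_minus[OF filterlim_ident, of "0::real"] by simp
  with approx have "(\<lambda>x. norm (f (- x) - eval_ncpoly q (- x) p)) \<in> O[nhds 0](\<lambda>x. (- x) ^ Suc N)"
    unfolding ncp_approx_def by (rule landau_o.big.compose)
  also have "(\<lambda>x::real. (- x) ^ Suc N) \<in> O[nhds 0](\<lambda>x. x ^ Suc N)"
    by (intro bigoI[of _ 1]) (simp add: abs_mult power_abs)
  finally show "(\<lambda>x. norm (f x - eval_ncpoly q x p) + norm (f (- x) - eval_ncpoly q (- x) p))
      \<in> O[nhds 0](\<lambda>x. x ^ Suc N)"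
    using approx unfolding ncp_approx_def by (intro sum_in_bigo)
  have "norm (f x - f (- x))
      \<le> norm (f x - eval_ncpoly q x p) + norm (f (- x) - eval_ncpoly q (- x) p)" for x
  proof -
    have "eval_ncpoly q (- x) p = eval_ncpoly q x p"
      using eval_ncpoly_uminus_add_odd[of q x p] odd[of x] by simp
    moreover have "norm (f x - f (- x))
        \<le> norm (f x - eval_ncpoly q x p) + norm (eval_ncpoly q x p - f (- x))"
      by (rule norm_diff_triangle_le[OF order_refl order_refl])
    ultimately show ?thesis
      by (simp add: norm_minus_commute)
  qed
  then show "eventually (\<lambda>x. norm (norm (f x - f (- x)))
      \<le> norm (f x - eval_ncpoly q x p) + norm (f (- x) - eval_ncpoly q (- x) p)) (nhds 0)"
    by simp
qed

lemma eventually_near_identity: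
  fixes D :: "real \<Rightarrow> 'n::finite cmat"
  assumes "(D \<longlongrightarrow> mat 1) F"
  shows "eventually (\<lambda>x. real CARD('n) ^ 3 * norm (D x - mat 1) \<le> 1/2) F"
proof -
  have "eventually (\<lambda>x. dist (D x) (mat 1) < 1 / (2 * real CARD('n) ^ 3)) F"
    using assms by (rule tendstoD) simp
  then show ?thesis
    by eventually_elim (simp add: dist_norm field_simps)
qed

lemma eventually_norm_sub_cayley_le:
  fixes A B C D W :: "real \<Rightarrow> 'n::finite cmat"
  assumes "(D \<longlongrightarrow> mat 1) F" "(B \<longlongrightarrow> mat 1) F"
    and "\<And>x. D x ** C x = C x ** D x" and "eventually (\<lambda>x. W x ** B x = A x) F"
  shows "eventually (\<lambda>x. norm (W x - C x ** matrix_inv (D x))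
    \<le> 4 * norm (D x ** A x - C x ** B x)) F"
  using eventually_near_identity[OF assms(1)] eventually_near_identity[OF assms(2)] assms(4)
  by eventually_elim (rule norm_sub_cayley_le[OF _ _ assms(3)])

section \<open>The sixth-order scheme\<close>

definition Z_ncp :: "real \<Rightarrow> real \<Rightarrow> real \<Rightarrow> real \<Rightarrow> real \<Rightarrow> ncpoly" where
  "Z_ncp k1 k2 k3 k4 k5 = ncp_collect (ncp_shift 1 (ncp_var 0)
   @ ncp_shift 3 (ncp_scale (1/24) (ncp_var 2) @ ncp_scale (1/12) (ncp_comm (ncp_var 1) (ncp_var 0))
      @ ncp_scale k1 (ncp_pow (ncp_var 0) 3))
   @ ncp_shift 5 (ncp_scale (1/1920) (ncp_var 4)
     @ ncp_scale (1/480) (ncp_comm (ncp_var 3) (ncp_var 0))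
     @ ncp_scale (1/480) (ncp_comm (ncp_var 1) (ncp_var 2))
     @ ncp_scale (1/240) (ncp_comm (ncp_comm (ncp_var 0) (ncp_var 1)) (ncp_var 1))
     @ ncp_scale k2 (ncp_comm (ncp_comm (ncp_var 2) (ncp_var 0)) (ncp_var 0))
     @ ncp_scale k3 (ncp_mult (ncp_mult (ncp_var 0) (ncp_var 2)) (ncp_var 0))
     @ ncp_scale k4 (ncp_comm (ncp_pow (ncp_var 0) 3) (ncp_var 1))
     @ ncp_scale (1/240)
         (ncp_comm (ncp_mult (ncp_mult (ncp_var 0) (ncp_var 1)) (ncp_var 0)) (ncp_var 0))
     @ ncp_scale k5 (ncp_pow (ncp_var 0) 5)))"

text \<open>
  \<open>V_taylor_term m\<close> is the degree \<open>m\<close> term of the Taylor expansion of the fundamental solution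
  at \<open>t\<close>; its coefficient \<open>V\<^sub>m\<close> satisfies \<open>(m + 1) V\<^sub>m\<^sub>+\<^sub>1 = (\<Sum>k\<le>m. Q\<^sup>(\<^sup>k\<^sup>) V\<^sub>m\<^sub>-\<^sub>k / k!)\<close>.
\<close>

fun V_taylor_term :: "nat \<Rightarrow> ncpoly" where
  "V_taylor_term 0 = ncp_one"
| "V_taylor_term (Suc m) = ncp_shift 1 (ncp_scale (1 / real (Suc m))
     (concat (map (\<lambda>k. ncp_mult [(1 / fact k, k, [k])] (V_taylor_term (m - k))) [0..<Suc m])))"

definition V_taylor :: "nat \<Rightarrow> ncpoly" where
  "V_taylor N = concat (map V_taylor_term [0..<Suc N])"

lemma ncp_pow_numeral: "ncp_pow p (numeral n) = ncp_mult p (ncp_pow p (pred_numeral n))"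
  by (simp add: numeral_eq_Suc)

lemma V_taylor_term_numeral:
  "V_taylor_term (numeral n) = ncp_shift 1 (ncp_scale (1 / real (numeral n))
     (concat (map (\<lambda>k. ncp_mult [(1 / fact k, k, [k])] (V_taylor_term (pred_numeral n - k)))
       [0..<numeral n])))"
  by (simp add: numeral_eq_Suc)

lemma eval_V_taylor_0: "eval_ncpoly q 0 (V_taylor N) = mat 1"
  by (induct N) (simp_all add: V_taylor_def eval_ncpoly_append eval_ncpoly_shift eval_ncpoly_one)

lemmas ncp_compute_simps = ncp_one_def ncp_var_def ncp_scale_def ncp_shift_def ncp_dilate_def
  ncp_deriv_def ncp_mult_def ncp_comm_def ncp_mult_trunc_def Q_taylor_def ncp_pow_numeral
  V_taylor_term_numeral

(* Normal forms are computed once and reused: simp would recompute them inside larger terms. *)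
schematic_goal V_taylor_6_eq: "V_taylor 6 = ?V"
  by (simp add: V_taylor_def ncp_compute_simps upt_rec)

lemma V_taylor_6_defect:
  "\<forall>m\<in>set (ncp_collect (ncp_mult_trunc 5 (Q_taylor 6) (V_taylor 6)
     @ ncp_scale (-1) (filter (\<lambda>(c, k, w). k \<le> 5) (ncp_deriv (V_taylor 6))))). fst m = 0"
  unfolding V_taylor_6_eq by (simp add: ncp_compute_simps upt_rec)

schematic_goal V_taylor_6_half_eq: "ncp_collect (ncp_dilate (1/2) (V_taylor 6)) = ?V"
  unfolding V_taylor_6_eq by (simp add: ncp_compute_simps)

schematic_goal Fpoly_neg_Z_ncp_eq:
  "ncp_collect (ncp_poly_trunc 6 (ncp_scale (-1) (Z_ncp k1 k2 k3 k4 k5)) ncp_one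
     [1, 1/2, a2, a3, a4, a5, a6]) = ?F"
  by (simp add: Z_ncp_def ncp_compute_simps)

lemma filter_odd_ncp_mult_trunc:
  assumes "even (Suc N)"
  shows "filter (\<lambda>(c, k, w). odd k) (ncp_mult_trunc (Suc N) p p')
       = filter (\<lambda>(c, k, w). odd k) (ncp_mult_trunc N p p')"
  unfolding ncp_mult_trunc_eq_filter filter_filter
  by (rule filter_cong) (use assms in \<open>auto simp: le_Suc_eq\<close>)

lemma Fpoly_V_odd_part_vanishes:
  assumes "k1 = a2 - 2 * a3 - 1/12" "k2 = (1/24) * (k1 + 1/30)" "k3 = k1 / 8"
    "k4 = - (1/12) * (k1 - 1/60)"
    "k5 = 1/120 - a2/4 + a3/2 + 2 * a2^2 - 10 * a2 * a3 + 12 * a3^2 + a4 - 2 * a5"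
  shows "\<forall>m\<in>set (ncp_collect (filter (\<lambda>(c, k, w). odd k) (ncp_mult_trunc 6
     (ncp_collect (ncp_poly_trunc 6 (ncp_scale (-1) (Z_ncp k1 k2 k3 k4 k5)) ncp_one
       [1, 1/2, a2, a3, a4, a5, a6]))
     (ncp_collect (ncp_dilate (1/2) (V_taylor 6)))))). fst m = 0"
  unfolding filter_odd_ncp_mult_trunc[of 5, simplified] Fpoly_neg_Z_ncp_eq V_taylor_6_half_eq
  by (simp add: ncp_mult_trunc_def) (simp add: assms field_simps power2_eq_square)

lemma fundamental_solution_V_taylor_6:
  fixes Q :: "real \<Rightarrow> 'n::finite cmat" and U :: "real \<Rightarrow> real \<Rightarrow> 'n cmat"
  assumes anal: "analytic_near Q t \<delta>"
    and U_ode: "\<And>s s0. \<bar>s - t\<bar> < \<delta> \<Longrightarrow> \<bar>s0 - t\<bar> < \<delta> \<Longrightarrow>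
        ((\<lambda>r. U r s0) has_vector_derivative (Q s ** U s s0)) (at s)"
    and U_init: "\<And>s0. \<bar>s0 - t\<bar> < \<delta> \<Longrightarrow> U s0 s0 = mat 1"
  shows "ncp_approx 6 (\<lambda>k. hderiv k Q t) (\<lambda>h. U (t + h) t) (V_taylor 6)"
proof -
  have "0 < \<delta>"
    using anal by (simp add: analytic_near_def)
  let ?P = "\<lambda>(c::real, k::nat, w::nat list). k \<le> 5"
  let ?R = "filter (Not \<circ> ?P) (ncp_mult (Q_taylor 6) (V_taylor 6))
    @ ncp_scale (-1) (filter (Not \<circ> ?P) (ncp_deriv (V_taylor 6)))"
  show ?thesis
  proof (rule fundamental_solution_ncp_approx[where R = ?R])
    fix x
    show "eval_ncpoly (\<lambda>k. hderiv k Q t) x (ncp_mult (Q_taylor 6) (V_taylor 6))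
        - eval_ncpoly (\<lambda>k. hderiv k Q t) x (ncp_deriv (V_taylor 6))
        = eval_ncpoly (\<lambda>k. hderiv k Q t) x ?R"
      using eval_ncpoly_filter[of "\<lambda>k. hderiv k Q t" x "ncp_mult (Q_taylor 6) (V_taylor 6)" ?P]
        eval_ncpoly_filter[of "\<lambda>k. hderiv k Q t" x "ncp_deriv (V_taylor 6)" ?P]
        eval_ncpoly_eq_0_if_collected_zero[OF V_taylor_6_defect, of "\<lambda>k. hderiv k Q t" x]
      by (simp add: eval_ncpoly_append eval_ncpoly_scale ncp_mult_trunc_eq_filter)
    show "eval_ncpoly (\<lambda>k. hderiv k Q t) 0 (V_taylor 6) = mat 1"
      by (rule eval_V_taylor_0)
  qed (use anal U_ode U_init \<open>0 < \<delta>\<close> in \<open>auto simp: analytic_near_def ncp_scale_def\<close>)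
qed

lemma eventually_fundamental_solution_compose:
  fixes Q :: "real \<Rightarrow> 'n::finite cmat" and U :: "real \<Rightarrow> real \<Rightarrow> 'n cmat"
  assumes anal: "analytic_near Q t \<delta>"
    and U_ode: "\<And>s s0. \<bar>s - t\<bar> < \<delta> \<Longrightarrow> \<bar>s0 - t\<bar> < \<delta> \<Longrightarrow>
        ((\<lambda>r. U r s0) has_vector_derivative (Q s ** U s s0)) (at s)"
    and U_init: "\<And>s0. \<bar>s0 - t\<bar> < \<delta> \<Longrightarrow> U s0 s0 = mat 1"
  shows "eventually (\<lambda>x. U (t + x/2) (t - x/2) ** U (t - x/2) t = U (t + x/2) t) (nhds 0)"
proof -
  have "0 < \<delta>"
    and Q': "\<And>k s. \<bar>s - t\<bar> < \<delta> \<Longrightarrow> (hderiv k Q has_vector_derivative hderiv (Suc k) Q s) (at s)"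
    using anal by (auto simp: analytic_near_def)
  obtain M where M: "\<And>h. \<bar>h\<bar> \<le> \<delta>/2 \<Longrightarrow> norm (Q (t + h)) \<le> M"
    using taylor_remainder_bound[of t \<delta> "\<lambda>k. hderiv k Q" 0, OF Q' \<open>0 < \<delta>\<close>] by auto
  define L where "L = 2 * (real CARD('n) ^ 3 * \<bar>M\<bar> + 1)"
  have "0 < L"
    unfolding L_def by (intro mult_pos_pos add_nonneg_pos) auto
  define e where "e = min \<delta> (1 / L)"
  have "0 < e"
    using \<open>0 < \<delta>\<close> \<open>0 < L\<close> by (simp add: e_def)
  have "U (t + x/2) (t - x/2) ** U (t - x/2) t = U (t + x/2) t" if "\<bar>x\<bar> < e" for x
  proof (rule fundamental_solution_compose[OF U_ode U_init _ abs_ge_zero \<open>0 < \<delta>\<close>])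
    show "norm (Q r) \<le> \<bar>M\<bar>" if "\<bar>r - t\<bar> \<le> \<delta>/2" for r
      using M[of "r - t"] that by simp
    show "\<bar>t - x/2 - t\<bar> \<le> \<delta>/2" "\<bar>t + x/2 - t\<bar> \<le> \<delta>/2"
      using that by (auto simp: e_def)
    have "\<bar>x\<bar> * L < 1"
      using that \<open>0 < L\<close> by (simp add: e_def field_simps)
    then show "\<bar>t + x/2 - (t - x/2)\<bar> * (real CARD('n) ^ 3 * \<bar>M\<bar>) \<le> 1/2"
      by (simp add: L_def algebra_simps)
  qed auto
  moreover have "eventually (\<lambda>x. \<bar>x\<bar> < e) (nhds (0::real))"
    using \<open>0 < e\<close> unfolding eventually_nhds_metric by (intro exI[of _ e]) (auto simp: dist_real_def)
  ultimately show ?thesis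
    by (auto elim!: eventually_mono)
qed

lemma eventually_norm_sub_Tcay_le:
  fixes Q :: "real \<Rightarrow> 'n::finite cmat" and U :: "real \<Rightarrow> real \<Rightarrow> 'n cmat"
  assumes anal: "analytic_near Q t \<delta>"
    and U_ode: "\<And>s s0. \<bar>s - t\<bar> < \<delta> \<Longrightarrow> \<bar>s0 - t\<bar> < \<delta> \<Longrightarrow>
        ((\<lambda>r. U r s0) has_vector_derivative (Q s ** U s s0)) (at s)"
    and U_init: "\<And>s0. \<bar>s0 - t\<bar> < \<delta> \<Longrightarrow> U s0 s0 = mat 1"
    and F: "((\<lambda>x. Fpoly a2 a3 a4 a5 a6 (- Z x)) \<longlongrightarrow> mat 1) (at_right 0)"
  shows "eventually (\<lambda>x. norm (U (t + x/2) (t - x/2) - Tcay a2 a3 a4 a5 a6 (Z x))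
    \<le> 4 * norm (Fpoly a2 a3 a4 a5 a6 (- Z x) ** U (t + x/2) t
      - Fpoly a2 a3 a4 a5 a6 (Z x) ** U (t - x/2) t)) (at_right 0)"
  unfolding Tcay_def
proof (rule eventually_norm_sub_cayley_le[OF F _ Fpoly_uminus_commute])
  have "((\<lambda>x. U (t + (- 1/2) * x) t) \<longlongrightarrow> U (t + (- 1/2) * 0) t) (nhds 0)"
    using ncp_approx_dilate[OF fundamental_solution_V_taylor_6[OF assms(1-3)]]
    by (rule ncp_approx_continuous)
  then show "((\<lambda>x. U (t - x/2) t) \<longlongrightarrow> mat 1) (at_right 0)"
    using U_init[of t] anal by (simp add: analytic_near_def tendsto_mono[OF at_within_le_nhds])
  show "eventually (\<lambda>x. U (t + x/2) (t - x/2) ** U (t - x/2) t = U (t + x/2) t) (at_right 0)"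
    using eventually_fundamental_solution_compose[OF assms(1-3)]
    by (rule filter_leD[OF at_within_le_nhds])
qed

theorem mainTheorem1:
  fixes Q :: "real \<Rightarrow> 'n::finite cmat"
    and U :: "real \<Rightarrow> real \<Rightarrow> 'n cmat"
    and t \<delta> a2 a3 a4 a5 a6 :: real
  assumes anal: "analytic_near Q t \<delta>"
    and U_ode: "\<And>s s0. \<bar>s - t\<bar> < \<delta> \<Longrightarrow> \<bar>s0 - t\<bar> < \<delta> \<Longrightarrow>
                 ((\<lambda>r. U r s0) has_vector_derivative (Q s ** U s s0)) (at s)"
    and U_init: "\<And>s0. \<bar>s0 - t\<bar> < \<delta> \<Longrightarrow> U s0 s0 = mat 1"
  defines "k1 \<equiv> a2 - 2 * a3 - 1/12"
  defines "k2 \<equiv> (1/24) * (k1 + 1/30)"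
    and "k3 \<equiv> k1 / 8"
    and "k4 \<equiv> - (1/12) * (k1 - 1/60)"
    and "k5 \<equiv> 1/120 - a2/4 + a3/2 + 2 * a2^2 - 10 * a2 * a3 + 12 * a3^2 + a4 - 2 * a5"
    and "Q0 \<equiv> Q t"
    and "Q1 \<equiv> hderiv 1 Q t"
    and "Q2 \<equiv> hderiv 2 Q t"
    and "Q3 \<equiv> hderiv 3 Q t"
    and "Q4 \<equiv> hderiv 4 Q t"
  defines "Z1 \<equiv> Q0"
    and "Z3 \<equiv> (1/24) *\<^sub>R Q2 + (1/12) *\<^sub>R comm Q1 Q0 + k1 *\<^sub>R mpow Q0 3"
    and "Z5 \<equiv> (1/1920) *\<^sub>R Q4 + (1/480) *\<^sub>R comm Q3 Q0 + (1/480) *\<^sub>R comm Q1 Q2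
              + (1/240) *\<^sub>R comm (comm Q0 Q1) Q1 + k2 *\<^sub>R comm (comm Q2 Q0) Q0
              + k3 *\<^sub>R (Q0 ** Q2 ** Q0) + k4 *\<^sub>R comm (mpow Q0 3) Q1
              + (1/240) *\<^sub>R comm (Q0 ** Q1 ** Q0) Q0 + k5 *\<^sub>R mpow Q0 5"
  defines "Z \<equiv> (\<lambda>\<tau>::real. \<tau> *\<^sub>R Z1 + (\<tau>^3) *\<^sub>R Z3 + (\<tau>^5) *\<^sub>R Z5)"
  shows "(\<lambda>\<tau>. norm (U (t + \<tau>/2) (t - \<tau>/2) - Tcay a2 a3 a4 a5 a6 (Z \<tau>)))
           \<in> O[at_right 0](\<lambda>\<tau>. \<tau> ^ 7)"
proof -
  define q where "q = (\<lambda>k. hderiv k Q t)"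
  have Z_odd: "Z (- x) = - Z x" for x
    unfolding Z_def by simp
  have "Z = (\<lambda>x. eval_ncpoly q x (Z_ncp k1 k2 k3 k4 k5))"
    unfolding assms(9-17) q_def Z_ncp_def
    by (simp add: fun_eq_iff eval_ncpoly_collect eval_ncpoly_append eval_ncpoly_shift
        eval_ncpoly_scale eval_ncpoly_var eval_ncpoly_comm eval_ncpoly_mult eval_ncpoly_pow
        add.assoc)
  then have F: "ncp_approx 6 q (\<lambda>x. Fpoly a2 a3 a4 a5 a6 (- Z x))
      (ncp_collect (ncp_poly_trunc 6 (ncp_scale (-1) (Z_ncp k1 k2 k3 k4 k5)) ncp_one
        [1, 1/2, a2, a3, a4, a5, a6]))"
    using ncp_approx_Fpoly[OF ncp_approx_scale[OF ncp_approx_eval, where r = "-1"]] by simp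
  have V: "ncp_approx 6 q (\<lambda>h. U (t + h) t) (V_taylor 6)"
    unfolding q_def by (rule fundamental_solution_V_taylor_6[OF anal U_ode U_init])
  let ?D = "\<lambda>x. norm (Fpoly a2 a3 a4 a5 a6 (- Z x) ** U (t + x/2) t
    - Fpoly a2 a3 a4 a5 a6 (Z x) ** U (t - x/2) t)"
  have "?D \<in> O[nhds 0](\<lambda>x. x ^ 7)"
    using ncp_approx_reflect[OF
        ncp_approx_mult_trunc[OF F ncp_approx_collect[OF ncp_approx_dilate[OF V]]]
        eval_ncpoly_eq_0_if_collected_zero[OF Fpoly_V_odd_part_vanishes[OF
          assms(4-8)[THEN meta_eq_to_obj_eq]]]]
    by (simp add: Z_odd)
  then have defect: "(\<lambda>x. 4 * ?D x) \<in> O[at_right 0](\<lambda>x. x ^ 7)"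
    using landau_o.big.filter_mono[OF at_within_le_nhds] by simp
  have "Z 0 = 0"
    unfolding Z_def by simp
  then have "((\<lambda>x. Fpoly a2 a3 a4 a5 a6 (- Z x)) \<longlongrightarrow> mat 1) (at_right 0)"
    using tendsto_mono[OF at_within_le_nhds ncp_approx_continuous[OF F]] by (simp add: Fpoly_zero)
  from eventually_norm_sub_Tcay_le[OF anal U_ode U_init this]
  show ?thesis
    by (intro bigo_if_norm_le[OF _ defect]) simp
qed

end
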